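(* Let $P\subseteq\mathbb{R}^d$ be a lattice polytope of dimension $d$, and suppose there are Fine core normals $a_0,\dots,a_\ell$ of $P$ and coefficients $\lambda_0,\dots,\lambda_\ell\in\mathbb{R}_{>0}$ such that $\sum_{i=0}^{\ell}\lambda_i a_i=0$. Then there is a lattice polytope $Q$ of dimension at most $\ell$ such that $\mu^F(P)=\mu^F(Q)$.
   Context: For a $d$-dimensional rational polytope $P\subseteq\mathbb{R}^d$ and $a\in(\mathbb{Z}^d)^*$ let $h_P(a)=\min_{x\in P}\langle a,x\rangle$. For $s>0$ the Fine adjoint polytope is $P^{F(s)}=\{x\in\mathbb{R}^d : \langle a,x\rangle\ge h_P(a)+s \text{ for all } a\in(\mathbb{Z}^d)^*\setminus\{0\}\}$. The Fine $\mathbb{Q}$-codegree is $\mu^F(P)=(\sup\{s>0 : P^{F(s)}\neq\emptyset\})^{-1}$, the Fine number is $n^F(P)=1/\mu^F(P)$, and the Fine core is $\operatorname{core}^F(P)=P^{F(n^F(P))}$. A Fine core normal of $P$ is a nonzero $a\in(\mathbb{Z}^d)^*$ with $\langle a,y\rangle=h_P(a)+n^F(P)$ for all $y\in\operatorname{core}^F(P)$. The Fine $\mathbb{Q}$-codegree of a polytope that is a lattice polytope with respect to some lattice $\Lambda$ is defined analogously using $\Lambda$ and its dual lattice in place of $\mathbb{Z}^d$ and $(\mathbb{Z}^d)^*$. *)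

theory Defs
  imports "HOL-Analysis.Analysis"
begin

text \<open>A lattice in a Euclidean space: the integer span of a linearly independent set
  (its real span is the ambient subspace of the lattice).\<close>
definition is_lattice :: "'a::euclidean_space set \<Rightarrow> bool" where
  "is_lattice L \<longleftrightarrow>
     (\<exists>B. independent B \<and> L = {\<Sum>b\<in>B. of_int (c b) *\<^sub>R b | c. True})"

definition std_lattice :: "'a::euclidean_space set" where
  "std_lattice = {x. \<forall>b\<in>Basis. x \<bullet> b \<in> \<int>}"

definition dual_lattice :: "'a::euclidean_space set \<Rightarrow> 'a set" where
  "dual_lattice L = {a \<in> span L. \<forall>x\<in>L. a \<bullet> x \<in> \<int>}"

definition lattice_polytope :: "'a::euclidean_space set \<Rightarrow> 'a set \<Rightarrow> bool" where
  "lattice_polytope L P \<longleftrightarrow> (\<exists>V. finite V \<and> V \<noteq> {} \<and> V \<subseteq> L \<and> P = convex hull V)"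

definition supp_fun :: "'a::euclidean_space set \<Rightarrow> 'a \<Rightarrow> real" where
  "supp_fun P a = Inf ((\<lambda>x. a \<bullet> x) ` P)"

definition fine_adjoint :: "'a::euclidean_space set \<Rightarrow> 'a set \<Rightarrow> real \<Rightarrow> 'a set" where
  "fine_adjoint L P s =
     {x \<in> span L. \<forall>a \<in> dual_lattice L - {0}. a \<bullet> x \<ge> supp_fun P a + s}"

definition fine_number :: "'a::euclidean_space set \<Rightarrow> 'a set \<Rightarrow> real" where
  "fine_number L P = Sup {s. s > 0 \<and> fine_adjoint L P s \<noteq> {}}"

definition fine_codegree :: "'a::euclidean_space set \<Rightarrow> 'a set \<Rightarrow> real" where
  "fine_codegree L P = inverse (fine_number L P)"

definition fine_core :: "'a::euclidean_space set \<Rightarrow> 'a set \<Rightarrow> 'a set" where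
  "fine_core L P = fine_adjoint L P (fine_number L P)"

definition fine_core_normal :: "'a::euclidean_space set \<Rightarrow> 'a set \<Rightarrow> 'a \<Rightarrow> bool" where
  "fine_core_normal L P a \<longleftrightarrow> a \<in> dual_lattice L \<and> a \<noteq> 0 \<and>
     (\<forall>y\<in>fine_core L P. a \<bullet> y = supp_fun P a + fine_number L P)"

end

theory Submission
  imports Defs
begin

text \<open>The core normals \<open>a i\<close> are integral, so \<open>U = span {a i}\<close> meets \<open>\<int>\<^sup>d\<close> in a lattice
  with a basis \<open>C\<close>. Let \<open>Q\<close> be the orthogonal projection of \<open>P\<close> onto \<open>U\<close>; it is a lattice polytope
  for the lattice \<open>L\<close> whose dual is \<open>U \<inter> \<int>\<^sup>d\<close>, so the Fine inequalities of \<open>Q\<close> are exactly the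
  Fine inequalities of \<open>P\<close> with normals in \<open>U\<close>. Hence the projection maps each Fine adjoint of \<open>P\<close>
  into the corresponding adjoint of \<open>Q\<close>, and \<open>n\<^sup>F(Q) \<ge> n\<^sup>F(P)\<close>. Conversely, a point \<open>y\<close> of the
  \<open>s\<close>-th adjoint of \<open>Q\<close> with \<open>s > n\<^sup>F(P)\<close> would satisfy \<open>a i \<bullet> y > a i \<bullet> z\<close> for a point \<open>z\<close> of
  the Fine core of \<open>P\<close> and every \<open>i\<close>, which the relation \<open>\<Sum> lam i *\<^sub>R a i = 0\<close> with positive
  \<open>lam i\<close> forbids. Finally \<open>dim U \<le> l\<close> because the \<open>l + 1\<close> vectors \<open>a i\<close> are linearly
  dependent.\<close>

section \<open>Integer spans and additive subgroups\<close>

definition int_span :: "'a::real_vector set \<Rightarrow> 'a set" where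
  "int_span B = {\<Sum>b\<in>B. of_int (c b) *\<^sub>R b | c. True}"

lemma is_lattice_iff_int_span: "is_lattice L \<longleftrightarrow> (\<exists>B. independent B \<and> L = int_span B)"
  unfolding is_lattice_def int_span_def ..

lemma int_span_memI: "x = (\<Sum>b\<in>B. of_int (c b) *\<^sub>R b) \<Longrightarrow> x \<in> int_span B"
  unfolding int_span_def by blast

definition add_subgroup :: "'a::real_vector set \<Rightarrow> bool" where
  "add_subgroup G \<longleftrightarrow> 0 \<in> G \<and> (\<forall>x\<in>G. \<forall>y\<in>G. x - y \<in> G)"

lemma add_subgroup_zero: "add_subgroup G \<Longrightarrow> 0 \<in> G"
  unfolding add_subgroup_def by blast

lemma add_subgroup_diff: "add_subgroup G \<Longrightarrow> x \<in> G \<Longrightarrow> y \<in> G \<Longrightarrow> x - y \<in> G"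
  unfolding add_subgroup_def by blast

lemma add_subgroup_minus: "add_subgroup G \<Longrightarrow> x \<in> G \<Longrightarrow> - x \<in> G"
  by (metis add_subgroup_diff add_subgroup_zero diff_0)

lemma add_subgroup_add: "add_subgroup G \<Longrightarrow> x \<in> G \<Longrightarrow> y \<in> G \<Longrightarrow> x + y \<in> G"
  by (metis add_subgroup_diff add_subgroup_minus diff_minus_eq_add)

lemma add_subgroup_scaleR_nat: "add_subgroup G \<Longrightarrow> x \<in> G \<Longrightarrow> of_nat n *\<^sub>R x \<in> G"
  by (induction n) (auto simp: add_subgroup_zero add_subgroup_add algebra_simps)

lemma add_subgroup_scaleR_int:
  assumes "add_subgroup G" "x \<in> G"
  shows "of_int k *\<^sub>R x \<in> G"
proof (cases "k \<ge> 0")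
  case True
  then show ?thesis using add_subgroup_scaleR_nat[OF assms, of "nat k"] by simp
next
  case False
  then show ?thesis
    using add_subgroup_minus[OF assms(1) add_subgroup_scaleR_nat[OF assms, of "nat (- k)"]] by simp
qed

lemma add_subgroup_int_combination:
  assumes "add_subgroup G" "\<And>b. b \<in> B \<Longrightarrow> f b \<in> G"
  shows "(\<Sum>b\<in>B. of_int (c b) *\<^sub>R f b) \<in> G"
  using assms(2)
  by (induction B rule: infinite_finite_induct)
     (auto simp: add_subgroup_zero[OF assms(1)] add_subgroup_add[OF assms(1)]
                 add_subgroup_scaleR_int[OF assms(1)])

lemma add_subgroup_Int: "add_subgroup G \<Longrightarrow> add_subgroup H \<Longrightarrow> add_subgroup (G \<inter> H)"
  unfolding add_subgroup_def by blast

lemma subspace_imp_add_subgroup: "subspace U \<Longrightarrow> add_subgroup U"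
  unfolding add_subgroup_def by (simp add: subspace_0 subspace_diff)

lemma add_subgroup_inner_Ints: "add_subgroup {x. a \<bullet> x \<in> \<int>}"
  unfolding add_subgroup_def by (auto simp: inner_diff_right)

lemma add_subgroup_int_span: "add_subgroup (int_span B)"
  unfolding add_subgroup_def
proof (intro conjI ballI)
  show "0 \<in> int_span B"
    by (rule int_span_memI[where c = "\<lambda>_. 0"]) simp
next
  fix x y assume "x \<in> int_span B" "y \<in> int_span B"
  then obtain c d where "x = (\<Sum>b\<in>B. of_int (c b) *\<^sub>R b)" "y = (\<Sum>b\<in>B. of_int (d b) *\<^sub>R b)"
    unfolding int_span_def by blast
  then have "x - y = (\<Sum>b\<in>B. of_int (c b - d b) *\<^sub>R b)"
    by (simp add: sum_subtractf scaleR_diff_left)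
  then show "x - y \<in> int_span B"
    by (rule int_span_memI)
qed

lemma int_span_subset: "add_subgroup G \<Longrightarrow> B \<subseteq> G \<Longrightarrow> int_span B \<subseteq> G"
  unfolding int_span_def using add_subgroup_int_combination[of G B id] by auto

lemma int_span_base:
  assumes "finite B" "b \<in> B"
  shows "b \<in> int_span B"
proof -
  have "(\<Sum>v\<in>B. of_int (if v = b then 1 else 0) *\<^sub>R v) = (\<Sum>v\<in>B. if v = b then v else 0)"
    by (rule sum.cong) auto
  also have "\<dots> = b"
    using assms by (simp add: sum.delta')
  finally show ?thesis
    by (intro int_span_memI[where c = "\<lambda>v. if v = b then 1 else 0"]) simp
qed

lemma int_span_mono: "finite C \<Longrightarrow> B \<subseteq> C \<Longrightarrow> int_span B \<subseteq> int_span C"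
  by (meson add_subgroup_int_span int_span_base int_span_subset subset_iff)

lemma int_span_empty: "int_span {} = {0}"
  unfolding int_span_def by simp

lemma int_span_subset_span: "int_span B \<subseteq> span B"
  using int_span_subset[OF subspace_imp_add_subgroup[OF subspace_span] span_superset] .

lemma span_int_span:
  assumes "finite B"
  shows "span (int_span B) = span B"
proof
  show "span (int_span B) \<subseteq> span B"
    using int_span_subset_span by (intro span_minimal) auto
  show "span B \<subseteq> span (int_span B)"
    using int_span_base[OF assms] by (intro span_mono) blast
qed

section \<open>Integral bases of subgroups of lattices\<close>

lemma dual_vector_exists:
  fixes C :: "'a::euclidean_space set"
  assumes "independent C" "c \<in> C"
  obtains w where "w \<in> span C" "w \<bullet> c = 1" "\<And>c'. c' \<in> C \<Longrightarrow> c' \<noteq> c \<Longrightarrow> w \<bullet> c' = 0"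
proof -
  obtain y z where y: "y \<in> span (C - {c})" and z: "\<And>v. v \<in> span (C - {c}) \<Longrightarrow> orthogonal z v"
    and c_eq: "c = y + z"
    using orthogonal_subspace_decomp_exists[of "C - {c}" c] by blast
  have "z \<noteq> 0"
    using assms y c_eq unfolding dependent_def by auto
  have "y \<in> span C"
    using y span_mono[of "C - {c}" C] by blast
  then have "z \<in> span C"
    using c_eq assms(2) by (metis add_diff_cancel_left' span_base span_diff)
  define w where "w = inverse (z \<bullet> z) *\<^sub>R z"
  show thesis
  proof
    show "w \<in> span C"
      unfolding w_def using \<open>z \<in> span C\<close> by (rule span_mul)
    show "w \<bullet> c = 1"
      using \<open>z \<noteq> 0\<close> z[OF y] c_eq unfolding w_def by (simp add: inner_add_right orthogonal_def)
    show "w \<bullet> c' = 0" if "c' \<in> C" "c' \<noteq> c" for c'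
      using z[of c'] that unfolding w_def by (simp add: span_base orthogonal_def)
  qed
qed

lemma add_subgroup_integral_functional_least_positive:
  assumes G: "add_subgroup G" and w_int: "\<And>x. x \<in> G \<Longrightarrow> w \<bullet> x \<in> \<int>"
    and x0: "x0 \<in> G" "w \<bullet> x0 \<noteq> 0"
  obtains g where "g \<in> G" "w \<bullet> g > 0" "\<And>x. x \<in> G \<Longrightarrow> w \<bullet> x > 0 \<Longrightarrow> w \<bullet> g \<le> w \<bullet> x"
proof -
  obtain k0 where k0: "w \<bullet> x0 = of_int k0"
    using w_int[OF x0(1)] by (auto elim: Ints_cases)
  have "\<exists>n::nat. n > 0 \<and> (\<exists>x\<in>G. w \<bullet> x = of_nat n)"
  proof (cases "k0 > 0")
    case True
    then show ?thesis using k0 x0 by (intro exI[of _ "nat k0"]) auto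
  next
    case False
    then show ?thesis using k0 x0 add_subgroup_minus[OF G x0(1)]
      by (intro exI[of _ "nat (- k0)"]) (auto intro!: bexI[of _ "- x0"])
  qed
  define m where "m = (LEAST n::nat. n > 0 \<and> (\<exists>x\<in>G. w \<bullet> x = of_nat n))"
  obtain g where "m > 0" and g: "g \<in> G" "w \<bullet> g = of_nat m"
    using LeastI_ex[OF \<open>\<exists>n. _\<close>] unfolding m_def by blast
  have "w \<bullet> g \<le> w \<bullet> x" if x: "x \<in> G" "w \<bullet> x > 0" for x
  proof -
    obtain k where k: "w \<bullet> x = of_int k"
      using w_int[OF x(1)] by (auto elim: Ints_cases)
    then have "m \<le> nat k"
      unfolding m_def using x by (intro Least_le) auto
    then show ?thesis
      using g(2) k x(2) by simp
  qed
  then show thesis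
    using that g \<open>m > 0\<close> by simp
qed

lemma add_subgroup_integral_functional_cyclic:
  assumes G: "add_subgroup G" and w_int: "\<And>x. x \<in> G \<Longrightarrow> w \<bullet> x \<in> \<int>"
    and x0: "x0 \<in> G" "w \<bullet> x0 \<noteq> 0"
  obtains g where "g \<in> G" "w \<bullet> g > 0" "\<And>x. x \<in> G \<Longrightarrow> \<exists>k::int. w \<bullet> x = of_int k * (w \<bullet> g)"
proof -
  obtain g where g: "g \<in> G" "w \<bullet> g > 0"
    and g_least: "\<And>x. x \<in> G \<Longrightarrow> w \<bullet> x > 0 \<Longrightarrow> w \<bullet> g \<le> w \<bullet> x"
    by (metis add_subgroup_integral_functional_least_positive[OF assms])
  obtain m where m: "w \<bullet> g = of_int m"
    using w_int[OF g(1)] by (auto elim: Ints_cases)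
  have "\<exists>k::int. w \<bullet> x = of_int k * (w \<bullet> g)" if x: "x \<in> G" for x
  proof -
    obtain k where k: "w \<bullet> x = of_int k"
      using w_int[OF x] by (auto elim: Ints_cases)
    define y where "y = x - of_int (k div m) *\<^sub>R g"
    have "y \<in> G"
      unfolding y_def using G x g(1) by (intro add_subgroup_diff add_subgroup_scaleR_int)
    have "w \<bullet> y = of_int (k - k div m * m)"
      unfolding y_def using k m by (simp add: inner_diff_right)
    then have wy: "w \<bullet> y = of_int (k mod m)"
      by (simp add: minus_div_mult_eq_mod)
    have "0 \<le> k mod m" "k mod m < m"
      using g(2) m by simp_all
    then have "k mod m = 0"
      using g_least[OF \<open>y \<in> G\<close>] wy m by fastforce
    then have "w \<bullet> x = of_int (k div m) * (w \<bullet> g)"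
      using k m by (metis add_0 minus_div_mult_eq_mod diff_eq_eq of_int_mult)
    then show ?thesis ..
  qed
  then show thesis
    using that g by blast
qed

lemma add_subgroup_basis_extend:
  fixes G C :: "'a::euclidean_space set"
  assumes G: "add_subgroup G" and w_int: "\<And>x. x \<in> G \<Longrightarrow> w \<bullet> x \<in> \<int>"
    and C: "finite C" "independent C" "{x \<in> G. w \<bullet> x = 0} = int_span C"
  shows "\<exists>C'. finite C' \<and> independent C' \<and> G = int_span C'"
proof (cases "\<forall>x\<in>G. w \<bullet> x = 0")
  case True
  then show ?thesis using C by auto
next
  case False
  then obtain g where g: "g \<in> G" "w \<bullet> g > 0"
    and multiple: "\<And>x. x \<in> G \<Longrightarrow> \<exists>k::int. w \<bullet> x = of_int k * (w \<bullet> g)"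
    using add_subgroup_integral_functional_cyclic[OF G w_int] by blast
  have C_G: "C \<subseteq> G" and w_C: "\<And>c. c \<in> C \<Longrightarrow> w \<bullet> c = 0"
    using C int_span_base by blast+
  have "g \<notin> span C"
    using orthogonal_to_span[of g C w] w_C g(2) by (auto simp: orthogonal_def)
  then have indep: "independent (insert g C)"
    using C(2) by (simp add: independent_insert)
  have "G \<subseteq> int_span (insert g C)"
  proof
    fix x assume x: "x \<in> G"
    then obtain k where k: "w \<bullet> x = of_int k * (w \<bullet> g)"
      using multiple by blast
    define y where "y = x - of_int k *\<^sub>R g"
    have "y \<in> G" "w \<bullet> y = 0"
      unfolding y_def using G x g(1) k by (auto intro: add_subgroup_diff add_subgroup_scaleR_int
          simp: inner_diff_right)
    then have "y \<in> int_span (insert g C)"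
      using C(1,3) int_span_mono[of "insert g C" C] by auto
    moreover have "g \<in> int_span (insert g C)"
      using C(1) by (simp add: int_span_base)
    ultimately have "y + of_int k *\<^sub>R g \<in> int_span (insert g C)"
      using add_subgroup_int_span by (blast intro: add_subgroup_add add_subgroup_scaleR_int)
    then show "x \<in> int_span (insert g C)" unfolding y_def by simp
  qed
  moreover have "int_span (insert g C) \<subseteq> G"
    using C_G g(1) by (intro int_span_subset G) auto
  ultimately show ?thesis
    using indep C(1) by (intro exI[of _ "insert g C"]) auto
qed

lemma int_span_insert_coordinate:
  fixes B :: "'a::euclidean_space set"
  assumes "independent (insert b B)" "b \<notin> B"
  obtains w where "\<And>x. x \<in> int_span (insert b B) \<Longrightarrow> w \<bullet> x \<in> \<int> \<and> x - (w \<bullet> x) *\<^sub>R b \<in> int_span B"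
    and "\<And>v. v \<in> span B \<Longrightarrow> w \<bullet> v = 0"
proof -
  obtain w where "w \<in> span (insert b B)" "w \<bullet> b = 1"
    and w_B: "\<And>c. c \<in> insert b B \<Longrightarrow> c \<noteq> b \<Longrightarrow> w \<bullet> c = 0"
    using dual_vector_exists[OF assms(1) insertI1] by blast
  have w_span_B: "w \<bullet> v = 0" if "v \<in> span B" for v
    using orthogonal_to_span[OF that, of w] w_B assms(2) by (auto simp: orthogonal_def)
  have coord: "w \<bullet> x \<in> \<int> \<and> x - (w \<bullet> x) *\<^sub>R b \<in> int_span B"
    if x: "x \<in> int_span (insert b B)" for x
  proof -
    obtain c where "x = (\<Sum>v\<in>insert b B. of_int (c v) *\<^sub>R v)"
      using x unfolding int_span_def by blast
    then have x: "x = of_int (c b) *\<^sub>R b + (\<Sum>v\<in>B. of_int (c v) *\<^sub>R v)"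
      using assms finiteI_independent[OF assms(1)] by simp
    have s: "(\<Sum>v\<in>B. of_int (c v) *\<^sub>R v) \<in> int_span B"
      by (rule int_span_memI) (rule refl)
    then have "w \<bullet> (\<Sum>v\<in>B. of_int (c v) *\<^sub>R v) = 0"
      using w_span_B int_span_subset_span by blast
    then have "w \<bullet> x = of_int (c b)"
      using x \<open>w \<bullet> b = 1\<close> by (simp add: inner_add_right)
    then show ?thesis using x s by simp
  qed
  show thesis
    using coord w_span_B by (rule that)
qed

lemma add_subgroup_of_int_span_has_basis:
  fixes B G :: "'a::euclidean_space set"
  assumes "independent B" "add_subgroup G" "G \<subseteq> int_span B"
  shows "\<exists>C. finite C \<and> independent C \<and> G = int_span C"
  using finiteI_independent[OF assms(1)] assms
proof (induction B arbitrary: G rule: finite_induct)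
  case empty
  then have "G = int_span {}"
    by (auto simp: int_span_empty add_subgroup_zero)
  then show ?case
    by (intro exI[of _ "{}"]) (simp add: independent_empty)
next
  case (insert b B)
  obtain w where coord_span: "\<And>x. x \<in> int_span (insert b B) \<Longrightarrow>
      w \<bullet> x \<in> \<int> \<and> x - (w \<bullet> x) *\<^sub>R b \<in> int_span B"
    and w_span_B: "\<And>v. v \<in> span B \<Longrightarrow> w \<bullet> v = 0"
    by (metis int_span_insert_coordinate[OF insert.prems(1) insert.hyps(2)])
  have coord: "w \<bullet> x \<in> \<int> \<and> x - (w \<bullet> x) *\<^sub>R b \<in> int_span B" if "x \<in> G" for x
    using coord_span subsetD[OF insert.prems(3) that] .
  have kernel: "{x \<in> G. w \<bullet> x = 0} = G \<inter> span B"
  proof (intro equalityI subsetI)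
    fix x assume "x \<in> {x \<in> G. w \<bullet> x = 0}"
    then show "x \<in> G \<inter> span B"
      using coord[of x] int_span_subset_span by auto
  qed (simp add: w_span_B)
  have "G \<inter> span B \<subseteq> int_span B"
    using coord w_span_B by fastforce
  moreover have "add_subgroup (G \<inter> span B)"
    using add_subgroup_Int[OF insert.prems(2) subspace_imp_add_subgroup[OF subspace_span]] .
  moreover have "independent B"
    using insert.prems(1) insert.hyps(2) by (simp add: independent_insert)
  ultimately obtain C where C: "finite C" "independent C" "G \<inter> span B = int_span C"
    using insert.IH by blast
  show ?case
  proof (rule add_subgroup_basis_extend[OF insert.prems(2) _ C(1,2)])
    show "w \<bullet> x \<in> \<int>" if "x \<in> G" for x
      using coord[OF that] ..
    show "{x \<in> G. w \<bullet> x = 0} = int_span C"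
      using kernel C(3) by simp
  qed
qed

section \<open>The standard lattice\<close>

lemma Basis_subset_std_lattice: "Basis \<subseteq> (std_lattice :: 'a::euclidean_space set)"
  unfolding std_lattice_def by (auto simp: inner_Basis)

lemma std_lattice_inner_Ints:
  "a \<in> std_lattice \<Longrightarrow> x \<in> std_lattice \<Longrightarrow> (a::'a::euclidean_space) \<bullet> x \<in> \<int>"
  unfolding std_lattice_def by (subst euclidean_inner) (auto intro!: Ints_sum Ints_mult)

lemma span_std_lattice: "span (std_lattice :: 'a::euclidean_space set) = UNIV"
  using span_mono[OF Basis_subset_std_lattice] span_Basis by auto

lemma dual_lattice_std_lattice: "dual_lattice (std_lattice :: 'a::euclidean_space set) = std_lattice"
  unfolding dual_lattice_def span_std_lattice
  using Basis_subset_std_lattice std_lattice_inner_Ints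
  by (auto simp: std_lattice_def inner_commute)

lemma std_lattice_subset_int_span_Basis: "(std_lattice :: 'a::euclidean_space set) \<subseteq> int_span Basis"
proof
  fix x :: 'a assume "x \<in> std_lattice"
  then have "x = (\<Sum>b\<in>Basis. of_int \<lfloor>x \<bullet> b\<rfloor> *\<^sub>R b)"
    unfolding std_lattice_def by (simp add: euclidean_representation)
  then show "x \<in> int_span Basis"
    by (rule int_span_memI)
qed

lemma add_subgroup_std_lattice: "add_subgroup (std_lattice :: 'a::euclidean_space set)"
  unfolding add_subgroup_def std_lattice_def by (auto simp: inner_diff_left)

lemma std_lattice_Int_span_has_basis:
  fixes A :: "'a::euclidean_space set"
  assumes "A \<subseteq> std_lattice"
  obtains C where "independent C" "span C = span A" "span A \<inter> std_lattice = int_span C"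
proof -
  have "add_subgroup (span A \<inter> std_lattice)"
    by (intro add_subgroup_Int subspace_imp_add_subgroup subspace_span add_subgroup_std_lattice)
  then obtain C where C: "finite C" "independent C" "span A \<inter> std_lattice = int_span C"
    using add_subgroup_of_int_span_has_basis[OF independent_Basis]
      std_lattice_subset_int_span_Basis by blast
  have "span C = span A"
  proof
    show "span C \<subseteq> span A"
      using int_span_base[OF C(1)] C(3) by (intro span_minimal) auto
    have "A \<subseteq> span C"
    proof
      fix x assume "x \<in> A"
      then have "x \<in> int_span C"
        using assms span_base[of x A] C(3) by auto
      then show "x \<in> span C"
        by (rule subsetD[OF int_span_subset_span])
    qed
    then show "span A \<subseteq> span C"
      by (rule span_minimal[OF _ subspace_span])
  qed
  then show thesis using that C(2,3) by blast
qed

section \<open>The lattice dual to a basis\<close>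

lemma span_inner_zero_imp_zero:
  assumes "x \<in> span S" "\<And>s. s \<in> S \<Longrightarrow> x \<bullet> s = 0"
  shows "x = 0"
  using orthogonal_to_span[OF assms(1), of x] assms(2) by (simp add: orthogonal_def)

locale dual_basis =
  fixes C :: "'a::euclidean_space set" and ds :: "'a \<Rightarrow> 'a"
  assumes independent_C: "independent C"
    and ds_in_span: "\<And>c. c \<in> C \<Longrightarrow> ds c \<in> span C"
    and inner_ds: "\<And>c c'. c \<in> C \<Longrightarrow> c' \<in> C \<Longrightarrow> ds c \<bullet> c' = (if c = c' then 1 else 0)"
begin

lemma finite_C: "finite C"
  using finiteI_independent[OF independent_C] .

text \<open>The orthogonal projection onto \<open>span C\<close>.\<close>
definition proj :: "'a \<Rightarrow> 'a" where
  "proj x = (\<Sum>c\<in>C. (x \<bullet> c) *\<^sub>R ds c)"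

definition dual_lat :: "'a set" where
  "dual_lat = int_span (ds ` C)"

lemma sum_inner_ds: "c' \<in> C \<Longrightarrow> (\<Sum>c\<in>C. f c * (ds c \<bullet> c')) = f c'"
  using finite_C by (simp add: inner_ds if_distrib[of "(*) _"] cong: if_cong)

lemma sum_inner_ds': "c' \<in> C \<Longrightarrow> (\<Sum>c\<in>C. f c * (c \<bullet> ds c')) = f c'"
  using finite_C by (simp add: inner_commute[of _ "ds c'"] inner_ds if_distrib[of "(*) _"] cong: if_cong)

lemma inj_on_ds: "inj_on ds C"
  by (rule inj_onI) (metis inner_ds zero_neq_one)

lemma independent_ds: "independent (ds ` C)"
proof
  assume "dependent (ds ` C)"
  then obtain u where u: "\<exists>v\<in>ds ` C. u v \<noteq> 0" "(\<Sum>v\<in>ds ` C. u v *\<^sub>R v) = 0"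
    using dependent_finite[of "ds ` C"] finite_C by auto
  have sum_0: "(\<Sum>c\<in>C. u (ds c) *\<^sub>R ds c) = 0"
    using u(2) inj_on_ds by (simp add: sum.reindex)
  have "u (ds c') = 0" if "c' \<in> C" for c'
  proof -
    have "0 = (\<Sum>c\<in>C. u (ds c) *\<^sub>R ds c) \<bullet> c'"
      using sum_0 by simp
    also have "\<dots> = u (ds c')"
      using sum_inner_ds[OF that, of "\<lambda>c. u (ds c)"] by (simp add: inner_sum_left)
    finally show ?thesis by simp
  qed
  then show False using u(1) by auto
qed

lemma span_ds: "span (ds ` C) = span C"
proof
  show "span (ds ` C) \<subseteq> span C"
    using ds_in_span by (intro span_minimal) auto
  have "ds ` C \<subseteq> span C"
    using ds_in_span by blast
  moreover have "dim (span C) \<le> card (ds ` C)"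
    using card_image[OF inj_on_ds] dim_eq_card_independent[OF independent_C] by simp
  ultimately show "span C \<subseteq> span (ds ` C)"
    using card_ge_dim_independent independent_ds by blast
qed

lemma expansion_in_C:
  assumes "u \<in> span C"
  shows "u = (\<Sum>c\<in>C. (u \<bullet> ds c) *\<^sub>R c)"
proof -
  have "u - (\<Sum>c\<in>C. (u \<bullet> ds c) *\<^sub>R c) = 0"
  proof (rule span_inner_zero_imp_zero)
    show "u - (\<Sum>c\<in>C. (u \<bullet> ds c) *\<^sub>R c) \<in> span (ds ` C)"
      unfolding span_ds by (intro span_diff[OF assms] span_sum span_mul span_base)
    fix v assume "v \<in> ds ` C"
    then obtain c' where "c' \<in> C" "v = ds c'" by blast
    then show "(u - (\<Sum>c\<in>C. (u \<bullet> ds c) *\<^sub>R c)) \<bullet> v = 0"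
      by (simp add: inner_diff_left inner_sum_left sum_inner_ds')
  qed
  then show ?thesis by simp
qed

lemma proj_in_span: "proj x \<in> span C"
  unfolding proj_def by (intro span_sum span_mul ds_in_span)

lemma inner_proj_C: "c \<in> C \<Longrightarrow> proj x \<bullet> c = x \<bullet> c"
  unfolding proj_def by (simp add: inner_sum_left sum_inner_ds)

lemma inner_proj:
  assumes "a \<in> span C"
  shows "a \<bullet> proj x = a \<bullet> x"
proof -
  have "orthogonal (proj x - x) a"
    using assms by (rule orthogonal_to_span) (simp add: orthogonal_def inner_diff_left inner_proj_C)
  then show ?thesis
    by (simp add: orthogonal_def inner_commute inner_diff_right)
qed

lemma proj_id: "u \<in> span C \<Longrightarrow> proj u = u"
  using span_inner_zero_imp_zero[of "proj u - u" C] proj_in_span inner_proj_C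
  by (simp add: span_diff inner_diff_left)

lemma linear_proj: "linear proj"
  by (rule linearI) (simp_all add: proj_def inner_add_left scaleR_add_left sum.distrib scaleR_sum_right)

lemma range_proj: "range proj = span C"
  using proj_in_span proj_id by (auto intro: image_eqI[of _ proj, OF proj_id[symmetric]])

lemma is_lattice_dual_lat: "is_lattice dual_lat"
  unfolding is_lattice_iff_int_span dual_lat_def using independent_ds by blast

lemma span_dual_lat: "span dual_lat = span C"
  unfolding dual_lat_def using span_int_span[of "ds ` C"] finite_C span_ds by simp

lemma ds_in_dual_lat: "c \<in> C \<Longrightarrow> ds c \<in> dual_lat"
  unfolding dual_lat_def using finite_C by (intro int_span_base) auto

lemma proj_in_dual_lat:
  assumes "\<And>c. c \<in> C \<Longrightarrow> x \<bullet> c \<in> \<int>"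
  shows "proj x \<in> dual_lat"
proof -
  have "proj x = (\<Sum>c\<in>C. of_int \<lfloor>x \<bullet> c\<rfloor> *\<^sub>R ds c)"
    unfolding proj_def using assms by (intro sum.cong) simp_all
  also have "\<dots> \<in> dual_lat"
    unfolding dual_lat_def
    by (intro add_subgroup_int_combination add_subgroup_int_span ds_in_dual_lat[unfolded dual_lat_def])
  finally show ?thesis .
qed

lemma dual_lattice_dual_lat: "dual_lattice dual_lat = int_span C"
proof
  show "dual_lattice dual_lat \<subseteq> int_span C"
  proof
    fix a assume "a \<in> dual_lattice dual_lat"
    then have a: "a \<in> span C" "\<And>c. c \<in> C \<Longrightarrow> a \<bullet> ds c \<in> \<int>"
      unfolding dual_lattice_def span_dual_lat using ds_in_dual_lat by auto
    have "a = (\<Sum>c\<in>C. of_int \<lfloor>a \<bullet> ds c\<rfloor> *\<^sub>R c)"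
      using expansion_in_C[OF a(1)] a(2) by simp
    then show "a \<in> int_span C"
      by (rule int_span_memI)
  qed
next
  show "int_span C \<subseteq> dual_lattice dual_lat"
  proof
    fix a assume a: "a \<in> int_span C"
    have "ds c \<bullet> a \<in> \<int>" if "c \<in> C" for c
    proof -
      have "C \<subseteq> {x. ds c \<bullet> x \<in> \<int>}"
        using that inner_ds by auto
      then have "int_span C \<subseteq> {x. ds c \<bullet> x \<in> \<int>}"
        by (rule int_span_subset[OF add_subgroup_inner_Ints])
      then show ?thesis using a by blast
    qed
    then have "dual_lat \<subseteq> {x. a \<bullet> x \<in> \<int>}"
      unfolding dual_lat_def
      by (intro int_span_subset add_subgroup_inner_Ints) (auto simp: inner_commute)
    moreover have "a \<in> span dual_lat"
      using a int_span_subset_span span_dual_lat by blast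
    ultimately show "a \<in> dual_lattice dual_lat"
      unfolding dual_lattice_def by auto
  qed
qed

end

lemma dual_basis_exists:
  fixes C :: "'a::euclidean_space set"
  assumes "independent C"
  obtains ds where "dual_basis C ds"
proof -
  have "\<forall>c\<in>C. \<exists>w. w \<in> span C \<and> (\<forall>c'\<in>C. w \<bullet> c' = (if c = c' then 1 else 0))"
  proof
    fix c assume "c \<in> C"
    then obtain w where "w \<in> span C" "w \<bullet> c = 1" "\<And>c'. c' \<in> C \<Longrightarrow> c' \<noteq> c \<Longrightarrow> w \<bullet> c' = 0"
      using dual_vector_exists[OF assms] by metis
    then show "\<exists>w. w \<in> span C \<and> (\<forall>c'\<in>C. w \<bullet> c' = (if c = c' then 1 else 0))"
      by (intro exI[of _ w]) auto
  qed
  then obtain ds where "\<forall>c\<in>C. ds c \<in> span C \<and> (\<forall>c'\<in>C. ds c \<bullet> c' = (if c = c' then 1 else 0))"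
    by metis
  then have "dual_basis C ds"
    using assms by unfold_locales auto
  then show thesis by (rule that)
qed

section \<open>Fine adjoints with respect to the standard lattice\<close>

lemma compact_lattice_polytope: "lattice_polytope L P \<Longrightarrow> compact P"
  unfolding lattice_polytope_def by (auto intro: compact_convex_hull finite_imp_compact)

lemma convex_lattice_polytope: "lattice_polytope L P \<Longrightarrow> convex P"
  unfolding lattice_polytope_def by auto

lemma supp_fun_le:
  assumes "compact P" "p \<in> P"
  shows "supp_fun P a \<le> a \<bullet> p"
proof -
  have "bounded ((\<lambda>x. a \<bullet> x) ` P)"
    using assms(1) by (intro compact_imp_bounded compact_continuous_image continuous_intros)
  then show ?thesis
    unfolding supp_fun_def using assms(2) by (auto intro: cInf_lower bounded_imp_bdd_below)
qed

lemma fine_adjoint_antimono: "s \<le> t \<Longrightarrow> fine_adjoint L P t \<subseteq> fine_adjoint L P s"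
  unfolding fine_adjoint_def by force

lemma fine_adjoint_Sup:
  assumes "S \<noteq> {}" "bdd_above S"
  shows "fine_adjoint L P (Sup S) = (\<Inter>s\<in>S. fine_adjoint L P s)"
proof -
  have "supp_fun P a + Sup S \<le> a \<bullet> x \<longleftrightarrow> (\<forall>s\<in>S. supp_fun P a + s \<le> a \<bullet> x)" for a x
    using cSup_le_iff[OF assms, of "a \<bullet> x - supp_fun P a"] by (simp add: algebra_simps)
  then show ?thesis
    using assms(1) unfolding fine_adjoint_def by auto
qed

lemma fine_adjoint_std_lattice:
  "fine_adjoint std_lattice P s = {x. \<forall>a\<in>std_lattice - {0}. supp_fun P a + s \<le> a \<bullet> x}"
  unfolding fine_adjoint_def dual_lattice_std_lattice span_std_lattice by simp

lemma norm_ge_1_if_std_lattice: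
  assumes "a \<in> std_lattice" "a \<noteq> (0::'a::euclidean_space)"
  shows "1 \<le> norm a"
proof -
  obtain b where b: "b \<in> Basis" "a \<bullet> b \<noteq> 0"
    using assms(2) euclidean_all_zero_iff by blast
  then have "1 \<le> \<bar>a \<bullet> b\<bar>"
    using assms(1) unfolding std_lattice_def by (auto elim!: Ints_cases)
  then show ?thesis
    using Basis_le_norm[OF b(1), of a] by linarith
qed

lemma fine_adjoint_std_lattice_nonempty:
  fixes P :: "'a::euclidean_space set"
  assumes "compact P" "convex P" "aff_dim P = DIM('a)"
  shows "\<exists>s>0. fine_adjoint std_lattice P s \<noteq> {}"
proof -
  have "P \<noteq> {}"
    using assms(3) by auto
  moreover have "rel_interior P = interior P"
    using assms(3) by (intro interior_rel_interior) simp
  ultimately obtain x where "x \<in> interior P"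
    using rel_interior_eq_empty[OF assms(2)] by auto
  then obtain r where r: "r > 0" "cball x r \<subseteq> P"
    using mem_interior_cball by blast
  have "x \<in> fine_adjoint std_lattice P r"
    unfolding fine_adjoint_std_lattice
  proof (intro CollectI ballI)
    fix a :: 'a assume a: "a \<in> std_lattice - {0}"
    then have norm_a: "1 \<le> norm a"
      using norm_ge_1_if_std_lattice by blast
    define p where "p = x - (r / norm a) *\<^sub>R a"
    have "p \<in> P"
      using r a unfolding p_def by (intro subsetD[OF r(2)]) (simp add: dist_norm)
    then have "supp_fun P a \<le> a \<bullet> p"
      by (rule supp_fun_le[OF assms(1)])
    also have "a \<bullet> p = a \<bullet> x - r * norm a"
      unfolding p_def using norm_a
      by (simp add: inner_diff_right power2_norm_eq_inner[symmetric] power2_eq_square)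
    also have "\<dots> \<le> a \<bullet> x - r"
      using norm_a r(1) by (simp add: mult_le_cancel_left1)
    finally show "supp_fun P a + r \<le> a \<bullet> x" by simp
  qed
  then show ?thesis
    using r(1) by blast
qed

lemma fine_adjoint_std_lattice_Basis_bounds:
  fixes P :: "'a::euclidean_space set"
  assumes "x \<in> fine_adjoint std_lattice P s" "b \<in> Basis"
  shows "supp_fun P b + s \<le> x \<bullet> b" "x \<bullet> b \<le> - supp_fun P (- b) - s"
proof -
  have "b \<in> std_lattice - {0}" "- b \<in> std_lattice - {0}"
    using assms(2) Basis_subset_std_lattice add_subgroup_minus[OF add_subgroup_std_lattice]
    by (auto simp: nonzero_Basis)
  then have "supp_fun P b + s \<le> b \<bullet> x" "supp_fun P (- b) + s \<le> (- b) \<bullet> x"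
    using assms(1) unfolding fine_adjoint_std_lattice by blast+
  then show "supp_fun P b + s \<le> x \<bullet> b" "x \<bullet> b \<le> - supp_fun P (- b) - s"
    by (auto simp: inner_commute)
qed

lemma bdd_above_fine_adjoint_std_lattice_nonempty:
  fixes P :: "'a::euclidean_space set"
  shows "bdd_above {s. s > 0 \<and> fine_adjoint std_lattice P s \<noteq> {}}"
proof -
  obtain b :: 'a where b: "b \<in> Basis"
    using nonempty_Basis by blast
  show ?thesis
  proof (rule bdd_aboveI)
    fix s assume "s \<in> {s. s > 0 \<and> fine_adjoint std_lattice P s \<noteq> {}}"
    then obtain x where "x \<in> fine_adjoint std_lattice P s" by auto
    from fine_adjoint_std_lattice_Basis_bounds[OF this b]
    have "2 * s \<le> - (supp_fun P b + supp_fun P (- b))" by linarith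
    then show "s \<le> - (supp_fun P b + supp_fun P (- b)) / 2" by simp
  qed
qed

lemma compact_fine_adjoint_std_lattice:
  fixes P :: "'a::euclidean_space set"
  shows "compact (fine_adjoint std_lattice P s)"
  unfolding compact_eq_bounded_closed
proof
  define M where "M = (\<Sum>b\<in>(Basis::'a set). \<bar>supp_fun P b\<bar> + \<bar>supp_fun P (- b)\<bar> + \<bar>s\<bar>)"
  show "bounded (fine_adjoint std_lattice P s)"
    unfolding bounded_iff
  proof (intro exI[of _ M] ballI)
    fix x assume x: "x \<in> fine_adjoint std_lattice P s"
    have "norm x \<le> (\<Sum>b\<in>Basis. \<bar>x \<bullet> b\<bar>)"
      by (rule norm_le_l1)
    also have "\<dots> \<le> M"
      unfolding M_def
      using fine_adjoint_std_lattice_Basis_bounds[OF x] by (intro sum_mono) fastforce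
    finally show "norm x \<le> M" .
  qed
  have "fine_adjoint std_lattice P s = (\<Inter>a\<in>std_lattice - {0}. {x. supp_fun P a + s \<le> a \<bullet> x})"
    unfolding fine_adjoint_std_lattice by auto
  then show "closed (fine_adjoint std_lattice P s)"
    by (simp add: closed_INT closed_halfspace_ge)
qed

text \<open>The core is the intersection of the nested, nonempty, compact adjoints.\<close>
lemma fine_core_std_lattice_nonempty:
  fixes P :: "'a::euclidean_space set"
  assumes "compact P" "convex P" "aff_dim P = DIM('a)"
  shows "fine_core std_lattice P \<noteq> {}"
proof -
  define S where "S = {s. s > 0 \<and> fine_adjoint std_lattice P s \<noteq> {}}"
  obtain s0 where s0: "s0 \<in> S"
    using fine_adjoint_std_lattice_nonempty[OF assms] unfolding S_def by blast
  have "fine_adjoint std_lattice P s0 \<inter> (\<Inter>s\<in>S. fine_adjoint std_lattice P s) \<noteq> {}"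
  proof (rule compact_imp_fip_image[OF compact_fine_adjoint_std_lattice])
    show "closed (fine_adjoint std_lattice P s)" for s
      using compact_fine_adjoint_std_lattice by (rule compact_imp_closed)
  next
    fix I assume I: "finite I" "I \<subseteq> S"
    define t where "t = Max (insert s0 I)"
    have "t \<in> insert s0 I"
      unfolding t_def using I(1) by (intro Max_in) auto
    then have "t \<in> S"
      using I(2) s0 by blast
    have "fine_adjoint std_lattice P t \<subseteq> fine_adjoint std_lattice P s" if "s \<in> insert s0 I" for s
      unfolding t_def using I(1) that by (intro fine_adjoint_antimono) simp
    then have "fine_adjoint std_lattice P t
        \<subseteq> fine_adjoint std_lattice P s0 \<inter> (\<Inter>s\<in>I. fine_adjoint std_lattice P s)"
      by blast
    with \<open>t \<in> S\<close> show "fine_adjoint std_lattice P s0 \<inter> (\<Inter>s\<in>I. fine_adjoint std_lattice P s) \<noteq> {}"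
      unfolding S_def by blast
  qed
  moreover have "fine_core std_lattice P = (\<Inter>s\<in>S. fine_adjoint std_lattice P s)"
    unfolding fine_core_def fine_number_def S_def[symmetric] using s0
    by (intro fine_adjoint_Sup) (auto simp: S_def bdd_above_fine_adjoint_std_lattice_nonempty)
  ultimately show ?thesis by blast
qed

section \<open>Positive linear relations\<close>

lemma positive_relation_bound:
  fixes a :: "nat \<Rightarrow> 'a::real_inner"
  assumes "\<forall>i\<le>l. lam i > 0" "(\<Sum>i\<le>l. lam i *\<^sub>R a i) = 0"
    and "\<forall>i\<le>l. a i \<bullet> z = h i + n" "\<forall>i\<le>l. h i + s \<le> a i \<bullet> y"
  shows "s \<le> n"
proof (rule ccontr)
  assume "\<not> s \<le> n"
  then have "0 < lam i * (a i \<bullet> (y - z))" if "i \<le> l" for i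
    using assms(1,3,4) that by (intro mult_pos_pos) (auto simp: inner_diff_right)
  then have "0 < (\<Sum>i\<le>l. lam i * (a i \<bullet> (y - z)))"
    by (intro sum_pos) auto
  also have "\<dots> = (\<Sum>i\<le>l. lam i *\<^sub>R a i) \<bullet> (y - z)"
    by (simp add: inner_sum_left)
  finally show False
    using assms(2) by simp
qed

lemma dim_image_le_if_linear_relation:
  assumes "lam 0 \<noteq> 0" "(\<Sum>i\<le>l. lam i *\<^sub>R a i) = 0"
  shows "dim (a ` {..l}) \<le> l"
proof -
  have "lam 0 *\<^sub>R a 0 = - (\<Sum>i\<in>{1..l}. lam i *\<^sub>R a i)"
    using assms(2) by (simp add: atMost_atLeast0 sum.atLeast_Suc_atMost eq_neg_iff_add_eq_0)
  then have "a 0 = (- inverse (lam 0)) *\<^sub>R (\<Sum>i\<in>{1..l}. lam i *\<^sub>R a i)"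
    using assms(1) by (metis scaleR_minus_left scaleR_minus_right left_inverse scaleR_one scaleR_scaleR)
  then have a0: "a 0 \<in> span (a ` {1..l})"
    by (simp only:) (intro span_mul span_sum span_base imageI)
  have "a i \<in> span (a ` {1..l})" if "i \<le> l" for i
  proof (cases "i = 0")
    case True
    then show ?thesis using a0 by simp
  next
    case False
    then show ?thesis using that by (intro span_base imageI) auto
  qed
  then have "a ` {..l} \<subseteq> span (a ` {1..l})"
    by auto
  then have "dim (a ` {..l}) \<le> card (a ` {1..l})"
    by (intro dim_le_card) auto
  also have "\<dots> \<le> l"
    using card_image_le[of "{1..l}" a] by simp
  finally show ?thesis .
qed

section \<open>Projecting onto the span of the core normals\<close>

context dual_basis
begin

lemma supp_fun_proj_image: "b \<in> span C \<Longrightarrow> supp_fun (proj ` P) b = supp_fun P b"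
  unfolding supp_fun_def image_image by (simp add: inner_proj)

lemma fine_adjoint_proj_image:
  "fine_adjoint dual_lat (proj ` P) s =
     {x \<in> span C. \<forall>b\<in>int_span C - {0}. supp_fun P b + s \<le> b \<bullet> x}"
proof -
  have "supp_fun (proj ` P) b = supp_fun P b" if "b \<in> int_span C" for b
    using supp_fun_proj_image subsetD[OF int_span_subset_span that] by blast
  then show ?thesis
    unfolding fine_adjoint_def dual_lattice_dual_lat span_dual_lat by auto
qed

lemma proj_mem_fine_adjoint_proj_image:
  assumes "int_span C \<subseteq> std_lattice" "x \<in> fine_adjoint std_lattice P s"
  shows "proj x \<in> fine_adjoint dual_lat (proj ` P) s"
  unfolding fine_adjoint_proj_image
proof (intro CollectI conjI ballI proj_in_span)
  fix b assume b: "b \<in> int_span C - {0}"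
  then have "supp_fun P b + s \<le> b \<bullet> x"
    using assms unfolding fine_adjoint_std_lattice by blast
  moreover have "b \<bullet> proj x = b \<bullet> x"
    using b int_span_subset_span by (intro inner_proj) blast
  ultimately show "supp_fun P b + s \<le> b \<bullet> proj x" by simp
qed

lemma lattice_polytope_proj_image:
  assumes "C \<subseteq> std_lattice" "lattice_polytope std_lattice P"
  shows "lattice_polytope dual_lat (proj ` P)"
proof -
  obtain V where V: "finite V" "V \<noteq> {}" "V \<subseteq> std_lattice" "P = convex hull V"
    using assms(2) unfolding lattice_polytope_def by blast
  have "proj ` P = convex hull (proj ` V)"
    unfolding V(4) by (rule convex_hull_linear_image[OF linear_proj])
  moreover have "proj ` V \<subseteq> dual_lat"
    using V(3) assms(1) by (auto intro!: proj_in_dual_lat std_lattice_inner_Ints)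
  ultimately show ?thesis
    unfolding lattice_polytope_def using V(1,2) by blast
qed

lemma aff_dim_proj_image:
  assumes "aff_dim P = DIM('a)"
  shows "aff_dim (proj ` P) = int (dim dual_lat)"
proof -
  have "affine hull (proj ` P) = proj ` (affine hull P)"
    using affine_hull_linear_image[of proj P] linear_proj by (simp add: linear_conv_bounded_linear)
  also have "\<dots> = span C"
    using assms range_proj by (simp add: aff_dim_eq_full)
  finally have "aff_dim (proj ` P) = aff_dim (span C)"
    by (metis aff_dim_affine_hull)
  then show ?thesis
    using aff_dim_subspace[OF subspace_span, of C] span_dual_lat by (metis dim_span)
qed

lemma fine_number_proj_image:
  fixes a :: "nat \<Rightarrow> 'a" and lam :: "nat \<Rightarrow> real"
  assumes "int_span C \<subseteq> std_lattice" "compact P" "convex P" "aff_dim P = DIM('a)"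
    and normals: "\<forall>i\<le>l. fine_core_normal std_lattice P (a i) \<and> a i \<in> int_span C"
    and "\<forall>i\<le>l. lam i > 0" "(\<Sum>i\<le>l. lam i *\<^sub>R a i) = 0"
  shows "fine_number dual_lat (proj ` P) = fine_number std_lattice P"
proof -
  define n where "n = fine_number std_lattice P"
  define SP where "SP = {s. s > 0 \<and> fine_adjoint std_lattice P s \<noteq> {}}"
  define SQ where "SQ = {s. s > 0 \<and> fine_adjoint dual_lat (proj ` P) s \<noteq> {}}"
  obtain z where z: "z \<in> fine_core std_lattice P"
    using fine_core_std_lattice_nonempty[OF assms(2-4)] by blast
  have "SP \<noteq> {}"
    using fine_adjoint_std_lattice_nonempty[OF assms(2-4)] unfolding SP_def by blast
  have "SP \<subseteq> SQ"
    unfolding SP_def SQ_def using proj_mem_fine_adjoint_proj_image[OF assms(1)] by blast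
  have SQ_le: "s \<le> n" if s: "s \<in> SQ" for s
  proof -
    obtain y where y: "y \<in> fine_adjoint dual_lat (proj ` P) s"
      using s unfolding SQ_def by blast
    show ?thesis
    proof (rule positive_relation_bound[OF assms(6,7)])
      show "\<forall>i\<le>l. a i \<bullet> z = supp_fun P (a i) + n"
        using normals z unfolding fine_core_normal_def n_def by blast
      show "\<forall>i\<le>l. supp_fun P (a i) + s \<le> a i \<bullet> y"
        using normals y unfolding fine_adjoint_proj_image fine_core_normal_def by blast
    qed
  qed
  have "n \<le> Sup SQ"
    unfolding n_def fine_number_def SP_def[symmetric]
    using \<open>SP \<noteq> {}\<close> \<open>SP \<subseteq> SQ\<close> SQ_le by (intro cSup_subset_mono bdd_aboveI) auto
  moreover have "Sup SQ \<le> n"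
    using \<open>SP \<noteq> {}\<close> \<open>SP \<subseteq> SQ\<close> SQ_le by (intro cSup_least) auto
  ultimately show ?thesis
    unfolding fine_number_def SQ_def[symmetric] n_def by simp
qed

end

theorem mainTheorem2:
  fixes P :: "(real^'d) set" and a :: "nat \<Rightarrow> real^'d" and lam :: "nat \<Rightarrow> real" and l :: nat
  assumes "lattice_polytope std_lattice P"
    and "aff_dim P = int CARD('d)"
    and "\<forall>i\<le>l. fine_core_normal std_lattice P (a i)"
    and "\<forall>i\<le>l. lam i > 0"
    and "(\<Sum>i\<le>l. lam i *\<^sub>R a i) = 0"
  shows "\<exists>(L::(real^'d) set) (Q::(real^'d) set). is_lattice L \<and> lattice_polytope L Q \<and> aff_dim Q = int (dim L)
              \<and> aff_dim Q \<le> int l \<and> fine_codegree std_lattice P = fine_codegree L Q"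
proof -
  have full: "aff_dim P = DIM(real^'d)"
    using assms(2) by simp
  have "a ` {..l} \<subseteq> std_lattice"
    using assms(3) unfolding fine_core_normal_def dual_lattice_std_lattice by blast
  then obtain C where C: "independent C" "span C = span (a ` {..l})"
      "span (a ` {..l}) \<inter> std_lattice = int_span C"
    by (rule std_lattice_Int_span_has_basis)
  obtain ds where "dual_basis C ds"
    using dual_basis_exists[OF C(1)] .
  then interpret dual_basis C ds .
  have C_std: "int_span C \<subseteq> std_lattice" "C \<subseteq> std_lattice"
    using C(3) int_span_base[OF finite_C] by auto
  have "\<forall>i\<le>l. fine_core_normal std_lattice P (a i) \<and> a i \<in> int_span C"
    using assms(3) \<open>a ` {..l} \<subseteq> std_lattice\<close> C(3) span_base[of _ "a ` {..l}"] by blast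
  then have "fine_number dual_lat (proj ` P) = fine_number std_lattice P"
    using assms(1,4,5) C_std(1) full
    by (intro fine_number_proj_image compact_lattice_polytope convex_lattice_polytope)
  moreover have "dim dual_lat = dim (a ` {..l})"
    using C(2) span_dual_lat by (metis dim_span)
  moreover have "dim (a ` {..l}) \<le> l"
    using assms(4,5) by (intro dim_image_le_if_linear_relation) auto
  ultimately show ?thesis
    using is_lattice_dual_lat lattice_polytope_proj_image[OF C_std(2) assms(1)] aff_dim_proj_image[OF full]
    unfolding fine_codegree_def by (intro exI[of _ dual_lat] exI[of _ "proj ` P"]) auto
qed

end
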